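(* Fix $b\in\mathbb{N}$ with $b\ge2$. Then, as $x\to\infty$, \[ \sum_{\substack{0<r\le x\\ 0<s\le x^b}}\gcd_b(r,s)=x^{b+1}\frac{\zeta(b)}{\zeta(b+1)}+O(E(x)), \] where the sum is over integers $r,s$, $\zeta$ is the Riemann zeta function, and $E(x)=x^2\log x$ if $b=2$, $E(x)=x^b$ if $b>2$.
   Context: For $b\in\mathbb{N}$ and $r,s\in\mathbb{N}$, $\gcd_b(r,s)=\max\{k\in\mathbb{N} : k\mid r \text{ and } k^b\mid s\}$. *)

theory Defs
  imports "HOL-Analysis.Analysis" "HOL-Library.Landau_Symbols"
begin

definition gcd_b :: "nat \<Rightarrow> nat \<Rightarrow> nat \<Rightarrow> nat" where
  "gcd_b b r s = Max {k. k dvd r \<and> k ^ b dvd s}"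

definition zeta :: "real \<Rightarrow> real" where
  "zeta s = (\<Sum>n. 1 / (real (Suc n)) powr s)"

definition gcdb_sum :: "nat \<Rightarrow> real \<Rightarrow> real" where
  "gcdb_sum b x = (\<Sum>r\<in>{1..nat \<lfloor>x\<rfloor>}. \<Sum>s\<in>{1..nat \<lfloor>x ^ b\<rfloor>}. real (gcd_b b r s))"

definition err_E :: "nat \<Rightarrow> real \<Rightarrow> real" where
  "err_E b x = (if b = 2 then x\<^sup>2 * ln x else x ^ b)"

end

theory Submission
  imports Defs "HOL-Number_Theory.Number_Theory"
begin

text \<open>Every \<open>d\<close> with \<open>d dvd r\<close> and \<open>d ^ b dvd s\<close> divides \<open>gcd_b b r s\<close>, so
  \<open>gcd_b b r s\<close> is the sum of \<open>totient d\<close> over these \<open>d\<close>. Exchanging the order of summation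
  turns the double sum into \<open>\<Sum>d \<le> x. totient d * \<lfloor>x / d\<rfloor> * \<lfloor>x ^ b / d ^ b\<rfloor>\<close>.
  Dropping the floors costs at most \<open>x + x ^ b / d ^ (b - 1)\<close> per term, which sums to
  \<open>O(x\<^sup>2 log x)\<close> for \<open>b = 2\<close> and \<open>O(x ^ b)\<close> for \<open>b > 2\<close>. What remains is
  \<open>x ^ (b + 1)\<close> times a partial sum of the Dirichlet series
  \<open>\<Sum>d. totient d / d ^ (b + 1) = \<zeta>(b) / \<zeta>(b + 1)\<close>, whose tail beyond \<open>x\<close> is
  \<open>O(x ^ (1 - b))\<close>.\<close>

lemma lcm_power_nat: "lcm (a::nat) c ^ n = lcm (a ^ n) (c ^ n)"
proof (cases "a = 0 \<or> c = 0")
  case True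
  then show ?thesis by (cases n) auto
next
  case False
  have "lcm a c * gcd a c = a * c"
    by (metis prod_gcd_lcm_nat mult.commute)
  moreover have "lcm (a ^ n) (c ^ n) * gcd a c ^ n = a ^ n * c ^ n"
    by (metis prod_gcd_lcm_nat mult.commute gcd_exp)
  ultimately have "lcm a c ^ n * gcd a c ^ n = lcm (a ^ n) (c ^ n) * gcd a c ^ n"
    by (metis power_mult_distrib)
  then show ?thesis using False by simp
qed

lemma finite_gcd_b_candidates:
  assumes "(r::nat) > 0"
  shows "finite {k. k dvd r \<and> k ^ b dvd s}"
  using assms by (auto intro: finite_subset[of _ "{..r}"] dest: dvd_imp_le)

lemma gcd_b_dvd:
  assumes "r > 0"
  shows "gcd_b b r s dvd r" and "gcd_b b r s ^ b dvd s"
proof -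
  have "gcd_b b r s \<in> {k. k dvd r \<and> k ^ b dvd s}"
    unfolding gcd_b_def by (rule Max_in[OF finite_gcd_b_candidates[OF assms]]) auto
  then show "gcd_b b r s dvd r" and "gcd_b b r s ^ b dvd s" by simp_all
qed

text \<open>The candidates are closed under \<open>lcm\<close>, so the largest one is a multiple of all of them.\<close>
lemma dvd_gcd_b_iff:
  assumes "r > 0"
  shows "d dvd gcd_b b r s \<longleftrightarrow> d dvd r \<and> d ^ b dvd s" (is "d dvd ?g \<longleftrightarrow> _")
proof
  assume "d dvd ?g"
  then show "d dvd r \<and> d ^ b dvd s"
    using dvd_trans[OF _ gcd_b_dvd(1)[OF assms]] dvd_power_same[of d ?g b]
      dvd_trans[OF _ gcd_b_dvd(2)[OF assms]] by blast
next
  assume d: "d dvd r \<and> d ^ b dvd s"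
  then have "lcm d ?g \<in> {k. k dvd r \<and> k ^ b dvd s}"
    using gcd_b_dvd[OF assms] by (simp add: lcm_power_nat)
  then have "lcm d ?g \<le> ?g"
    unfolding gcd_b_def by (rule Max_ge[OF finite_gcd_b_candidates[OF assms]])
  moreover have "d > 0" and "?g > 0"
    using d assms gcd_b_dvd(1)[OF assms, of b s] by (auto intro!: Nat.gr0I)
  then have "?g \<le> lcm d ?g" by (intro dvd_imp_le) (simp_all add: lcm_pos_nat)
  ultimately have "lcm d ?g = ?g" by (rule order_antisym)
  then show "d dvd ?g" using dvd_lcm1[of d ?g] by simp
qed

lemma gcd_b_eq_sum_totient:
  assumes "r > 0"
  shows "gcd_b b r s = (\<Sum>d | d dvd r \<and> d ^ b dvd s. totient d)"
  using totient_divisor_sum[of "gcd_b b r s"] by (simp add: dvd_gcd_b_iff[OF assms])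

lemma card_multiples_atLeastAtMost:
  assumes "(d::nat) > 0"
  shows "card ({1..N} \<inter> {r. d dvd r}) = N div d"
proof -
  have "{1..N} \<inter> {r. d dvd r} = (*) d ` {1..N div d}"
  proof (intro equalityI subsetI)
    fix r assume "r \<in> {1..N} \<inter> {r. d dvd r}"
    then obtain k where "r = d * k" and "r \<in> {1..N}" by blast
    with assms have "k \<in> {1..N div d}"
      by (auto simp: less_eq_div_iff_mult_less_eq mult.commute[of d k] intro: Nat.gr0I)
    with \<open>r = d * k\<close> show "r \<in> (*) d ` {1..N div d}" by blast
  next
    fix r assume "r \<in> (*) d ` {1..N div d}"
    with assms show "r \<in> {1..N} \<inter> {r. d dvd r}"
      by (auto simp: less_eq_div_iff_mult_less_eq mult.commute)
  qed
  then show ?thesis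
    using assms by (simp add: card_image inj_on_def)
qed

lemma sum_gcd_b_eq_sum_totient:
  "(\<Sum>r\<in>{1..N}. \<Sum>s\<in>{1..M}. gcd_b b r s) = (\<Sum>d\<in>{1..N}. totient d * (N div d) * (M div d ^ b))"
proof -
  have "(\<Sum>r\<in>{1..N}. \<Sum>s\<in>{1..M}. gcd_b b r s)
      = (\<Sum>r\<in>{1..N}. \<Sum>s\<in>{1..M}. \<Sum>d\<in>{1..N}. of_bool (d dvd r) * of_bool (d ^ b dvd s) * totient d)"
  proof (intro sum.cong refl)
    fix r s assume "r \<in> {1..N}"
    then have "{d. d dvd r \<and> d ^ b dvd s} = {1..N} \<inter> {d. d dvd r \<and> d ^ b dvd s}"
      by (auto simp: Suc_le_eq dvd_pos_nat intro: order_trans[OF dvd_imp_le])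
    with \<open>r \<in> {1..N}\<close> show "gcd_b b r s = (\<Sum>d\<in>{1..N}. of_bool (d dvd r) * of_bool (d ^ b dvd s) * totient d)"
      by (simp add: gcd_b_eq_sum_totient flip: of_bool_conj)
  qed
  also have "\<dots> = (\<Sum>d\<in>{1..N}. \<Sum>r\<in>{1..N}. \<Sum>s\<in>{1..M}. of_bool (d dvd r) * of_bool (d ^ b dvd s) * totient d)"
    by (subst sum.swap) (rule sum.cong[OF refl], rule sum.swap)
  also have "\<dots> = (\<Sum>d\<in>{1..N}. (\<Sum>r\<in>{1..N}. of_bool (d dvd r)) * (\<Sum>s\<in>{1..M}. of_bool (d ^ b dvd s)) * totient d)"
    by (intro sum.cong refl) (subst sum_product, simp only: sum_distrib_right)
  also have "\<dots> = (\<Sum>d\<in>{1..N}. totient d * (N div d) * (M div d ^ b))"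
  proof (intro sum.cong refl)
    fix d assume "d \<in> {1..N}"
    then show "(\<Sum>r\<in>{1..N}. of_bool (d dvd r)) * (\<Sum>s\<in>{1..M}. of_bool (d ^ b dvd s)) * totient d
             = totient d * (N div d) * (M div d ^ b)"
      using card_multiples_atLeastAtMost[of d N] card_multiples_atLeastAtMost[of "d ^ b" M] by simp
  qed
  finally show ?thesis .
qed

lemma nat_floor_div_bounds:
  assumes "x \<ge> 0"
  shows "x / real D - 1 \<le> real (nat \<lfloor>x\<rfloor> div D)" and "real (nat \<lfloor>x\<rfloor> div D) \<le> x / real D"
proof -
  have "int (nat \<lfloor>x\<rfloor> div D) = \<lfloor>x\<rfloor> div int D"
    using assms by (simp add: zdiv_int)
  also have "\<dots> = \<lfloor>x / real D\<rfloor>"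
    using floor_divide_real_eq_div[of "int D" x] by simp
  finally have "real (nat \<lfloor>x\<rfloor> div D) = of_int \<lfloor>x / real D\<rfloor>"
    by (metis of_int_of_nat_eq)
  then show "x / real D - 1 \<le> real (nat \<lfloor>x\<rfloor> div D)" and "real (nat \<lfloor>x\<rfloor> div D) \<le> x / real D"
    by linarith+
qed

lemma abs_mult_diff_le:
  fixes u v X Y :: real
  assumes "X - 1 \<le> u" "u \<le> X" "Y - 1 \<le> v" "v \<le> Y" "0 \<le> X" "0 \<le> v"
  shows "\<bar>u * v - X * Y\<bar> \<le> X + Y"
proof -
  have "X * Y - u * v = X * (Y - v) + v * (X - u)"
    by (simp add: algebra_simps)
  moreover have "0 \<le> X * (Y - v)" and "X * (Y - v) \<le> X"
    using assms mult_left_mono[of "Y - v" 1 X] by auto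
  moreover have "0 \<le> v * (X - u)" and "v * (X - u) \<le> Y"
    using assms mult_left_mono[of "X - u" 1 v] by auto
  ultimately show ?thesis by linarith
qed

lemma totient_term_error:
  assumes "x \<ge> 0" "b \<ge> 1" "d \<ge> 1"
  shows "\<bar>real (totient d * (nat \<lfloor>x\<rfloor> div d) * (nat \<lfloor>x ^ b\<rfloor> div d ^ b))
            - x ^ (b + 1) * (totient d / real d ^ (b + 1))\<bar>
         \<le> x + x ^ b / real d ^ (b - 1)"
proof -
  define X Y where "X = x / real d" and "Y = x ^ b / real d ^ b"
  define u v where "u = real (nat \<lfloor>x\<rfloor> div d)" and "v = real (nat \<lfloor>x ^ b\<rfloor> div d ^ b)"
  have "\<bar>u * v - X * Y\<bar> \<le> X + Y"
    using nat_floor_div_bounds[of x d] nat_floor_div_bounds[of "x ^ b" "d ^ b"] assms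
    unfolding u_def v_def X_def Y_def by (intro abs_mult_diff_le) auto
  then have "totient d * \<bar>u * v - X * Y\<bar> \<le> real d * (X + Y)"
    using totient_le[of d] by (intro mult_mono) auto
  moreover have "real (totient d * (nat \<lfloor>x\<rfloor> div d) * (nat \<lfloor>x ^ b\<rfloor> div d ^ b))
      - x ^ (b + 1) * (totient d / real d ^ (b + 1)) = totient d * (u * v - X * Y)"
    using assms(3) unfolding u_def v_def X_def Y_def by (simp add: field_simps)
  moreover have "real d * (X + Y) = x + x ^ b / real d ^ (b - 1)"
  proof -
    have "real d ^ b = real d * real d ^ (b - 1)"
      using assms(2) by (simp add: power_eq_if)
    then show ?thesis
      using assms(3) unfolding X_def Y_def by (simp add: field_simps)
  qed
  ultimately show ?thesis
    by (simp add: abs_mult)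
qed

lemma gcdb_sum_partial_error:
  assumes "x \<ge> 0" "b \<ge> 1"
  defines "N \<equiv> nat \<lfloor>x\<rfloor>"
  shows "\<bar>gcdb_sum b x - x ^ (b + 1) * (\<Sum>d\<in>{1..N}. totient d / real d ^ (b + 1))\<bar>
         \<le> x * N + x ^ b * (\<Sum>d\<in>{1..N}. 1 / real d ^ (b - 1))"
proof -
  have "gcdb_sum b x = (\<Sum>d\<in>{1..N}. real (totient d * (N div d) * (nat \<lfloor>x ^ b\<rfloor> div d ^ b)))"
    unfolding gcdb_sum_def N_def by (simp only: sum_gcd_b_eq_sum_totient flip: of_nat_sum)
  then have "\<bar>gcdb_sum b x - x ^ (b + 1) * (\<Sum>d\<in>{1..N}. totient d / real d ^ (b + 1))\<bar>
      = \<bar>\<Sum>d\<in>{1..N}. real (totient d * (N div d) * (nat \<lfloor>x ^ b\<rfloor> div d ^ b))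
            - x ^ (b + 1) * (totient d / real d ^ (b + 1))\<bar>"
    by (simp add: sum_subtractf sum_distrib_left)
  also have "\<dots> \<le> (\<Sum>d\<in>{1..N}. x + x ^ b * (1 / real d ^ (b - 1)))"
    using totient_term_error[OF assms(1,2)] unfolding N_def
    by (intro order_trans[OF sum_abs] sum_mono) simp
  also have "\<dots> = x * N + x ^ b * (\<Sum>d\<in>{1..N}. 1 / real d ^ (b - 1))"
    by (simp add: sum.distrib sum_distrib_left)
  finally show ?thesis .
qed

lemma zeta_has_sum:
  assumes "k \<ge> 2"
  shows "((\<lambda>n::nat. 1 / real n ^ k) has_sum zeta (real k)) {1..}"
proof -
  have "summable (\<lambda>n. 1 / real (Suc n) ^ k)"
    using inverse_power_summable[OF assms, where 'a = real]
    by (subst (asm) summable_Suc_iff[symmetric]) (simp add: inverse_eq_divide)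
  then have "((\<lambda>n. 1 / real (Suc n) ^ k) has_sum zeta (real k)) UNIV"
    unfolding zeta_def by (intro sums_nonneg_imp_has_sum) (auto simp: powr_realpow summable_sums)
  also have "?this \<longleftrightarrow> ?thesis"
    by (rule has_sum_reindex_bij_witness[where i = "\<lambda>n. n - 1" and j = Suc]) auto
  finally show ?thesis .
qed

lemma zeta_pos:
  assumes "k \<ge> 2"
  shows "zeta (real k) > 0"
proof -
  have "(\<Sum>n\<in>{1}. 1 / real n ^ k) \<le> zeta (real k)"
    by (rule finite_sum_le_has_sum[OF zeta_has_sum[OF assms]]) auto
  then show ?thesis by simp
qed

lemma has_sum_dirichlet_convolution_nonneg:
  fixes f g :: "nat \<Rightarrow> real"
  assumes f: "(f has_sum F) {1..}" and g: "(g has_sum G) {1..}"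
    and f_nonneg: "\<And>n. f n \<ge> 0" and g_nonneg: "\<And>n. g n \<ge> 0"
  shows "((\<lambda>n. \<Sum>d | d dvd n. f d * g (n div d)) has_sum F * G) {1..}"
proof -
  have row: "((\<lambda>m. f d * g m) has_sum f d * G) {1..}" for d
    using has_sum_cmult_right[OF g] .
  have "((\<lambda>(d, m). f d * g m) has_sum F * G) ({1..} \<times> {1..})"
  proof (rule has_sum_SigmaI)
    show "((\<lambda>d. f d * G) has_sum F * G) {1..}"
      using has_sum_cmult_left[OF f] .
    then show "(\<lambda>(d, m). f d * g m) summable_on {1..} \<times> {1..}"
      using row f_nonneg g_nonneg by (intro summable_on_SigmaI) (auto simp: summable_on_def)
  qed (use row in simp)
  also have "?this \<longleftrightarrow> ((\<lambda>(n, d). f d * g (n div d)) has_sum F * G) (SIGMA n:{1..}. {d. d dvd n})"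
    by (rule has_sum_reindex_bij_witness[where j = "\<lambda>(d, m). (d * m, d)" and i = "\<lambda>(n, d). (d, n div d)"])
       (auto simp: Suc_le_eq dvd_pos_nat elim!: dvdE)
  finally show ?thesis
    by (rule has_sum_SigmaD) (auto intro: has_sum_finiteI)
qed

lemma totient_div_power_le: "totient d / real d ^ (k + 1) \<le> 1 / real d ^ k"
proof (cases "d = 0")
  case False
  have "totient d / real d ^ (k + 1) \<le> real d / real d ^ (k + 1)"
    using totient_le[of d] by (intro divide_right_mono) auto
  also have "\<dots> = 1 / real d ^ k"
    using False by simp
  finally show ?thesis .
qed simp

text \<open>Convolving with \<open>1 / m ^ (k + 1)\<close> turns \<open>totient d / d ^ (k + 1)\<close> into
  \<open>(\<Sum>d | d dvd n. totient d) / n ^ (k + 1) = 1 / n ^ k\<close>.\<close>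
lemma totient_dirichlet_series_has_sum:
  assumes "k \<ge> 2"
  shows "((\<lambda>d. totient d / real d ^ (k + 1)) has_sum zeta (real k) / zeta (real (k + 1))) {1..}"
proof -
  define a where "a d = totient d / real d ^ (k + 1)" for d
  have "a summable_on {1..}"
  proof (rule summable_on_comparison_test)
    show "(\<lambda>d. 1 / real d ^ k) summable_on {1..}"
      using zeta_has_sum[OF assms] by (auto simp: summable_on_def)
    show "a d \<le> 1 / real d ^ k" for d
      unfolding a_def by (rule totient_div_power_le)
  qed (simp add: a_def)
  then obtain C where C: "(a has_sum C) {1..}"
    by (auto simp: summable_on_def)
  have "((\<lambda>n. \<Sum>d | d dvd n. a d * (1 / real (n div d) ^ (k + 1))) has_sum C * zeta (real (k + 1))) {1..}"
    using assms by (intro has_sum_dirichlet_convolution_nonneg[OF C zeta_has_sum]) (auto simp: a_def)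
  also have "?this \<longleftrightarrow> ((\<lambda>n. 1 / real n ^ k) has_sum C * zeta (real (k + 1))) {1..}"
  proof (intro has_sum_cong)
    fix n :: nat assume "n \<in> {1..}"
    then have "(\<Sum>d | d dvd n. a d * (1 / real (n div d) ^ (k + 1))) = (\<Sum>d | d dvd n. totient d) / real n ^ (k + 1)"
      by (auto simp: a_def sum_divide_distrib real_of_nat_div power_divide intro!: sum.cong)
    also have "\<dots> = 1 / real n ^ k"
      using \<open>n \<in> {1..}\<close> by (simp add: totient_divisor_sum)
    finally show "(\<Sum>d | d dvd n. a d * (1 / real (n div d) ^ (k + 1))) = 1 / real n ^ k" .
  qed
  finally have "C * zeta (real (k + 1)) = zeta (real k)"
    using has_sum_unique zeta_has_sum[OF assms] by blast
  then have "C = zeta (real k) / zeta (real (k + 1))"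
    using zeta_pos[of "k + 1"] assms by (simp add: field_simps)
  then show ?thesis
    using C unfolding a_def by simp
qed

lemma inverse_power_le_telescoping:
  assumes "k \<ge> 2" "1 \<le> N" "N < d"
  shows "1 / real d ^ k \<le> (1 / real (d - 1) - 1 / real d) / real N ^ (k - 2)"
proof -
  have "real N ^ (k - 2) * (real d * real (d - 1)) \<le> real d ^ (k - 2) * (real d * real d)"
    using assms by (intro mult_mono power_mono) auto
  also have "\<dots> = real d ^ k"
    using assms(1) by (metis le_add_diff_inverse2 power_add power2_eq_square)
  finally have "1 / real d ^ k \<le> 1 / (real N ^ (k - 2) * (real d * real (d - 1)))"
    using assms by (intro frac_le) auto
  also have "\<dots> = (1 / real (d - 1) - 1 / real d) / real N ^ (k - 2)"
    using assms by (simp add: of_nat_diff field_simps)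
  finally show ?thesis .
qed

lemma sum_inverse_power_tail_le:
  assumes "k \<ge> 2" "1 \<le> N" "finite F" "F \<subseteq> {N<..}"
  shows "(\<Sum>d\<in>F. 1 / real d ^ k) \<le> 1 / real N ^ (k - 1)"
proof -
  define K where "K = Max (insert N F)"
  have "N \<le> K" and "F \<subseteq> {Suc N..K}"
    using assms(3,4) by (auto simp: K_def)
  have "(\<Sum>d\<in>F. 1 / real d ^ k) \<le> (\<Sum>d\<in>F. (1 / real (d - 1) - 1 / real d) / real N ^ (k - 2))"
    using assms by (intro sum_mono inverse_power_le_telescoping) auto
  also have "\<dots> \<le> (\<Sum>d\<in>{Suc N..K}. (1 / real (d - 1) - 1 / real d) / real N ^ (k - 2))"
  proof (rule sum_mono2)
    fix d assume "d \<in> {Suc N..K} - F"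
    then have "1 / real d \<le> 1 / real (d - 1)"
      using assms(2) by (simp add: frac_le)
    then show "0 \<le> (1 / real (d - 1) - 1 / real d) / real N ^ (k - 2)"
      by simp
  qed (use \<open>F \<subseteq> {Suc N..K}\<close> in auto)
  also have "\<dots> = (1 / real N - 1 / real K) / real N ^ (k - 2)"
    using sum_telescope''[OF \<open>N \<le> K\<close>, of "\<lambda>d. - 1 / real d"]
    by (simp add: sum_divide_distrib[symmetric])
  also have "\<dots> \<le> 1 / real N / real N ^ (k - 2)"
    by (intro divide_right_mono) auto
  also have "\<dots> = 1 / real N ^ (k - 1)"
  proof -
    have "k - 1 = Suc (k - 2)"
      using assms(1) by simp
    then show ?thesis by simp
  qed
  finally show ?thesis .
qed

lemma totient_dirichlet_series_tail:
  assumes "k \<ge> 2" "N \<ge> 1"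
  defines "S \<equiv> (\<Sum>d\<in>{1..N}. totient d / real d ^ (k + 1))"
  shows "0 \<le> zeta (real k) / zeta (real (k + 1)) - S"
    and "zeta (real k) / zeta (real (k + 1)) - S \<le> 1 / real N ^ (k - 1)"
proof -
  define a where "a d = totient d / real d ^ (k + 1)" for d
  have C: "(a has_sum zeta (real k) / zeta (real (k + 1))) {1..}"
    unfolding a_def by (rule totient_dirichlet_series_has_sum[OF assms(1)])
  have "a summable_on {N<..}"
    using has_sum_imp_summable[OF C] by (rule summable_on_subset_banach) auto
  then obtain T where T: "(a has_sum T) {N<..}"
    by (auto simp: summable_on_def)
  have "(a has_sum S + T) ({1..N} \<union> {N<..})"
    by (rule has_sum_Un_disjoint[OF has_sum_finiteI T]) (auto simp: S_def a_def)
  moreover have "{1..N} \<union> {N<..} = {1..}"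
    using assms(2) by auto
  ultimately have "zeta (real k) / zeta (real (k + 1)) = S + T"
    using C has_sum_unique by metis
  moreover have "0 \<le> T"
    using T by (rule has_sum_nonneg) (simp add: a_def)
  moreover have "T \<le> 1 / real N ^ (k - 1)"
    using T
  proof (rule has_sum_le_finite_sums)
    fix F assume F: "finite F" "F \<subseteq> {N<..}"
    have "sum a F \<le> (\<Sum>d\<in>F. 1 / real d ^ k)"
      unfolding a_def by (intro sum_mono totient_div_power_le)
    also have "\<dots> \<le> 1 / real N ^ (k - 1)"
      using assms F by (intro sum_inverse_power_tail_le)
    finally show "sum a F \<le> 1 / real N ^ (k - 1)" .
  qed
  ultimately show "0 \<le> zeta (real k) / zeta (real (k + 1)) - S"
    and "zeta (real k) / zeta (real (k + 1)) - S \<le> 1 / real N ^ (k - 1)"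
    by linarith+
qed

lemma sum_inverse_power_le_two:
  assumes "k \<ge> 2"
  shows "(\<Sum>d\<in>{1..N}. 1 / real d ^ k) \<le> 2"
proof (cases "N = 0")
  case False
  then have "{1..N} = insert 1 {1<..N}" by auto
  moreover have "(\<Sum>d\<in>{1<..N}. 1 / real d ^ k) \<le> 1 / real 1 ^ (k - 1)"
    using assms by (intro sum_inverse_power_tail_le) auto
  ultimately show ?thesis by simp
qed simp

lemma sum_inverse_le_one_plus_ln:
  assumes "N \<ge> 1"
  shows "(\<Sum>d\<in>{1..N}. 1 / real d) \<le> 1 + ln (real N)"
  using euler_mascheroni_sequence_decreasing[of 1 N] assms
  by (simp add: harm_def inverse_eq_divide)

lemma nat_floor_bounds:
  assumes "x \<ge> 1"
  shows "1 \<le> nat \<lfloor>x\<rfloor>" and "real (nat \<lfloor>x\<rfloor>) \<le> x" and "x \<le> 2 * real (nat \<lfloor>x\<rfloor>)"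
proof -
  have "real (nat \<lfloor>x\<rfloor>) = of_int \<lfloor>x\<rfloor>" and "1 \<le> \<lfloor>x\<rfloor>"
    using assms by simp_all
  then have "1 \<le> real (nat \<lfloor>x\<rfloor>)" "real (nat \<lfloor>x\<rfloor>) \<le> x" "x \<le> 2 * real (nat \<lfloor>x\<rfloor>)"
    using of_int_floor_le[of x] real_of_int_floor_add_one_gt[of x] by linarith+
  then show "1 \<le> nat \<lfloor>x\<rfloor>" and "real (nat \<lfloor>x\<rfloor>) \<le> x" and "x \<le> 2 * real (nat \<lfloor>x\<rfloor>)"
    by simp_all
qed

lemma power_div_power_le_double:
  fixes x y :: real
  assumes "0 \<le> x" "x \<le> 2 * y" "b \<ge> 1"
  shows "x ^ (b + 1) / y ^ (b - 1) \<le> 2 ^ (b - 1) * x\<^sup>2"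
proof (cases "y = 0")
  case False
  have "x ^ (b + 1) = x\<^sup>2 * x ^ (b - 1)"
    using assms(3) by (simp flip: power_add)
  also have "\<dots> \<le> x\<^sup>2 * (2 * y) ^ (b - 1)"
    using assms by (intro mult_left_mono power_mono) auto
  finally have "x ^ (b + 1) \<le> 2 ^ (b - 1) * x\<^sup>2 * y ^ (b - 1)"
    by (simp add: power_mult_distrib mult_ac)
  moreover have "y > 0"
    using False assms by simp
  ultimately show ?thesis
    by (simp add: divide_le_eq)
qed (use assms in simp)

lemma gcdb_sum_error_le:
  assumes "b \<ge> 2" "x \<ge> 1"
  shows "\<bar>gcdb_sum b x - x ^ (b + 1) * zeta (real b) / zeta (real (b + 1))\<bar>
         \<le> (1 + 2 ^ (b - 1)) * x\<^sup>2 + x ^ b * (\<Sum>d\<in>{1..nat \<lfloor>x\<rfloor>}. 1 / real d ^ (b - 1))"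
proof -
  define N where "N = nat \<lfloor>x\<rfloor>"
  define S where "S = (\<Sum>d\<in>{1..N}. totient d / real d ^ (b + 1))"
  define C where "C = zeta (real b) / zeta (real (b + 1))"
  define H where "H = (\<Sum>d\<in>{1..N}. 1 / real d ^ (b - 1))"
  have N: "1 \<le> N" "real N \<le> x" "x \<le> 2 * real N"
    using nat_floor_bounds[OF assms(2)] unfolding N_def by simp_all
  have partial: "\<bar>gcdb_sum b x - x ^ (b + 1) * S\<bar> \<le> x * N + x ^ b * H"
    using gcdb_sum_partial_error[of x b] assms unfolding S_def H_def N_def by simp
  have tail: "0 \<le> C - S" "C - S \<le> 1 / real N ^ (b - 1)"
    using totient_dirichlet_series_tail[OF assms(1) N(1)] unfolding C_def S_def by auto
  then have "0 \<le> x ^ (b + 1) * (C - S)" "x ^ (b + 1) * (C - S) \<le> x ^ (b + 1) / real N ^ (b - 1)"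
    using assms(2) mult_left_mono[OF tail(2), of "x ^ (b + 1)"] by auto
  moreover have "x ^ (b + 1) / real N ^ (b - 1) \<le> 2 ^ (b - 1) * x\<^sup>2"
    using N assms by (intro power_div_power_le_double) auto
  moreover have "x * N \<le> x\<^sup>2"
    using N assms(2) by (simp add: power2_eq_square)
  moreover have "gcdb_sum b x - x ^ (b + 1) * zeta (real b) / zeta (real (b + 1))
      = (gcdb_sum b x - x ^ (b + 1) * S) - x ^ (b + 1) * (C - S)"
    unfolding C_def by (simp add: algebra_simps)
  ultimately have "\<bar>gcdb_sum b x - x ^ (b + 1) * zeta (real b) / zeta (real (b + 1))\<bar>
      \<le> x\<^sup>2 + x ^ b * H + 2 ^ (b - 1) * x\<^sup>2"
    using partial abs_triangle_ineq4[of "gcdb_sum b x - x ^ (b + 1) * S" "x ^ (b + 1) * (C - S)"]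
    by linarith
  then show ?thesis
    unfolding H_def N_def by (simp add: algebra_simps)
qed

lemma gcdb_sum_error_le_err_E:
  assumes "b \<ge> 2" "x \<ge> exp 1"
  shows "\<bar>gcdb_sum b x - x ^ (b + 1) * zeta (real b) / zeta (real (b + 1))\<bar> \<le> (3 + 2 ^ (b - 1)) * err_E b x"
proof -
  have "x \<ge> 1"
    using assms(2) one_le_exp_iff[of 1] by linarith
  show ?thesis
  proof (cases "b = 2")
    case True
    have "ln x \<ge> 1"
      using assms(2) ln_ge_iff[of x 1] \<open>x \<ge> 1\<close> by simp
    have "ln (real (nat \<lfloor>x\<rfloor>)) \<le> ln x"
      using nat_floor_bounds[OF \<open>x \<ge> 1\<close>] by (intro ln_mono) auto
    then have "(\<Sum>d\<in>{1..nat \<lfloor>x\<rfloor>}. 1 / real d) \<le> 1 + ln x"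
      using sum_inverse_le_one_plus_ln[OF nat_floor_bounds(1)[OF \<open>x \<ge> 1\<close>]] by linarith
    then have "x\<^sup>2 * (\<Sum>d\<in>{1..nat \<lfloor>x\<rfloor>}. 1 / real d) \<le> x\<^sup>2 * (1 + ln x)"
      by (rule mult_left_mono) simp
    then have "x\<^sup>2 * (\<Sum>d\<in>{1..nat \<lfloor>x\<rfloor>}. 1 / real d) \<le> x\<^sup>2 + x\<^sup>2 * ln x"
      by (simp add: distrib_left)
    moreover have "x\<^sup>2 \<le> x\<^sup>2 * ln x"
      using \<open>ln x \<ge> 1\<close> by (simp add: mult_le_cancel_left1)
    moreover have "\<bar>gcdb_sum b x - x ^ (b + 1) * zeta (real b) / zeta (real (b + 1))\<bar>
        \<le> 3 * x\<^sup>2 + x\<^sup>2 * (\<Sum>d\<in>{1..nat \<lfloor>x\<rfloor>}. 1 / real d)"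
      using gcdb_sum_error_le[OF assms(1) \<open>x \<ge> 1\<close>] True by simp
    ultimately show ?thesis
      using True by (simp add: err_E_def)
  next
    case False
    have "(1 + 2 ^ (b - 1)) * x\<^sup>2 \<le> (1 + 2 ^ (b - 1)) * x ^ b"
      using assms(1) \<open>x \<ge> 1\<close> by (intro mult_left_mono power_increasing) auto
    moreover have "x ^ b * (\<Sum>d\<in>{1..nat \<lfloor>x\<rfloor>}. 1 / real d ^ (b - 1)) \<le> x ^ b * 2"
      using False assms(1) \<open>x \<ge> 1\<close> by (intro mult_left_mono sum_inverse_power_le_two) auto
    moreover have "(3 + 2 ^ (b - 1)) * x ^ b = (1 + 2 ^ (b - 1)) * x ^ b + x ^ b * 2"
      by (simp add: algebra_simps)
    ultimately show ?thesis
      using gcdb_sum_error_le[OF assms(1) \<open>x \<ge> 1\<close>] False by (simp add: err_E_def)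
  qed
qed

theorem mainTheorem3:
  fixes b :: nat
  assumes "b \<ge> 2"
  shows "(\<lambda>x. gcdb_sum b x - x ^ (b + 1) * zeta (real b) / zeta (real (b + 1)))
           \<in> O[at_top](err_E b)"
proof (rule bigoI)
  show "\<forall>\<^sub>F x in at_top. norm (gcdb_sum b x - x ^ (b + 1) * zeta (real b) / zeta (real (b + 1)))
          \<le> (3 + 2 ^ (b - 1)) * norm (err_E b x)"
    using eventually_ge_at_top[of "exp 1"]
  proof eventually_elim
    case (elim x)
    then have "x \<ge> 1"
      using one_le_exp_iff[of 1] by linarith
    then have "err_E b x \<ge> 0"
      by (simp add: err_E_def)
    then show ?case
      using gcdb_sum_error_le_err_E[OF assms elim] by simp
  qed
qed

end
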